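(* Let $c,\ell,N\in\mathbb{N}_+$ and let the average pooling layer map $w^{i-1}=(w^{i-1}_1,\dots,w^{i-1}_{\ell N})$, $w^{i-1}_m\in\mathbb{R}^c$, to $w^i=(w^i_1,\dots,w^i_N)$ with $w^i_k=\frac{1}{\ell}\sum_{j=1}^{\ell}w^{i-1}_{\ell(k-1)+j}$. Let $\mu=1/\sqrt{\ell}$ and let $T\in\mathbb{S}^c$ be positive definite. Then for all inputs $w^{i-1}_a,w^{i-1}_b$ and every $k=1,\dots,N$, $$-(w^i_{a,k}-w^i_{b,k})^\top T(w^i_{a,k}-w^i_{b,k})+\mu^2\sum_{j=1}^{\ell}\big(w^{i-1}_{a,\ell(k-1)+j}-w^{i-1}_{b,\ell(k-1)+j}\big)^\top T\big(w^{i-1}_{a,\ell(k-1)+j}-w^{i-1}_{b,\ell(k-1)+j}\big)\ge 0.$$ Consequently, with $\underline{w}$ denoting the column-wise stacked vector, the layer satisfies $$\begin{bmatrix}\underline{w}_a^i-\underline{w}_b^i\\ \underline{w}_a^{i-1}-\underline{w}_b^{i-1}\end{bmatrix}^\top\begin{bmatrix}Q & 0\\ 0 & R\end{bmatrix}\begin{bmatrix}\underline{w}_a^i-\underline{w}_b^i\\ \underline{w}_a^{i-1}-\underline{w}_b^{i-1}\end{bmatrix}\ge0$$ for all inputs, with $Q=-\mathrm{blkdiag}(T,\dots,T)$ ($N$ blocks) and $R=\mu^2\mathrm{blkdiag}(T,\dots,T)$ ($\ell N$ blocks).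
   Context: $\mathbb{S}^c$ denotes the real symmetric $c\times c$ matrices. For a sequence $w=(w_1,\dots,w_M)$ of vectors in $\mathbb{R}^c$, the column-wise stacked vector is $\underline{w}=(w_1^\top,\dots,w_M^\top)^\top$. *)

theory Defs
  imports Complex_Main
begin

text \<open>Conventions (0-based indexing). A vector in R^n is a function nat => real,
  only its values at indices < n matter.
  A sequence of M vectors in R^c is w :: nat => nat => real, w m r being the
  r-th component of the m-th vector (m < M, r < c).\<close>

definition qform :: "nat \<Rightarrow> (nat \<Rightarrow> nat \<Rightarrow> real) \<Rightarrow> (nat \<Rightarrow> real) \<Rightarrow> real" where
  "qform n A x = (\<Sum>i<n. \<Sum>j<n. x i * A i j * x j)"

definition sym_mat :: "nat \<Rightarrow> (nat \<Rightarrow> nat \<Rightarrow> real) \<Rightarrow> bool" where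
  "sym_mat n A \<longleftrightarrow> (\<forall>i<n. \<forall>j<n. A i j = A j i)"

definition pos_def :: "nat \<Rightarrow> (nat \<Rightarrow> nat \<Rightarrow> real) \<Rightarrow> bool" where
  "pos_def n A \<longleftrightarrow> sym_mat n A \<and> (\<forall>x. (\<exists>i<n. x i \<noteq> 0) \<longrightarrow> qform n A x > 0)"

definition avgpool :: "nat \<Rightarrow> (nat \<Rightarrow> nat \<Rightarrow> real) \<Rightarrow> nat \<Rightarrow> nat \<Rightarrow> real" where
  "avgpool l w k r = (1 / real l) * (\<Sum>j<l. w (l * k + j) r)"

definition stack :: "nat \<Rightarrow> (nat \<Rightarrow> nat \<Rightarrow> real) \<Rightarrow> nat \<Rightarrow> real" where
  "stack c w i = w (i div c) (i mod c)"

definition blkdiag :: "nat \<Rightarrow> nat \<Rightarrow> (nat \<Rightarrow> nat \<Rightarrow> real) \<Rightarrow> nat \<Rightarrow> nat \<Rightarrow> real" where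
  "blkdiag c n T i j = (if i < n * c \<and> j < n * c \<and> i div c = j div c
                         then T (i mod c) (j mod c) else 0)"

definition blk2 :: "nat \<Rightarrow> (nat \<Rightarrow> nat \<Rightarrow> real) \<Rightarrow> (nat \<Rightarrow> nat \<Rightarrow> real) \<Rightarrow> nat \<Rightarrow> nat \<Rightarrow> real" where
  "blk2 n1 Q R i j = (if i < n1 \<and> j < n1 then Q i j
                      else if n1 \<le> i \<and> n1 \<le> j then R (i - n1) (j - n1) else 0)"

definition vcat :: "nat \<Rightarrow> (nat \<Rightarrow> real) \<Rightarrow> (nat \<Rightarrow> real) \<Rightarrow> nat \<Rightarrow> real" where
  "vcat n1 x y i = (if i < n1 then x i else y (i - n1))"

end

theory Submission
  imports Defs
begin

text \<open>Write \<open>q\<close> for the quadratic form of \<open>T\<close> and \<open>d\<^sub>j\<close> for the \<open>\<ell>\<close> input differences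
  pooled into one output, whose mean \<open>m\<close> is the output difference. Expanding gives
  \<open>\<Sum>\<^sub>j q(d\<^sub>j - m) = \<Sum>\<^sub>j q(d\<^sub>j) - \<ell> q(m)\<close>; the cross terms cancel because the
  deviations \<open>d\<^sub>j - m\<close> sum to zero, so no symmetry of \<open>T\<close> is used. Positive
  semidefiniteness makes the left side nonnegative, which with \<open>\<mu>\<^sup>2 = 1/\<ell>\<close> is the
  local inequality. The block-diagonal quadratic form is the sum of these local terms
  over the \<open>N\<close> outputs.\<close>

lemma sum_lessThan_add:
  "(\<Sum>i<m + n. f i) = (\<Sum>i<m. f i) + (\<Sum>i<n. f (m + i))"
  for f :: "nat \<Rightarrow> 'a::comm_monoid_add"
  by (induction n) (auto simp: add.assoc)

lemma sum_lessThan_mult: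
  "(\<Sum>i<n * c. f i) = (\<Sum>m<n. \<Sum>r<c. f (m * c + r))"
  for f :: "nat \<Rightarrow> 'a::comm_monoid_add"
proof -
  have "(\<Sum>r<c. f (m * c + r)) = sum f {m * c..<m * c + c}" for m
    using sum.shift_bounds_nat_ivl[of f 0 "m * c" c] by (simp add: add.commute atLeast0LessThan)
  then show ?thesis
    by (simp add: sum.nat_group)
qed

lemma mult_add_less_mult:
  fixes m n r c :: nat
  assumes "m < n" "r < c"
  shows "m * c + r < n * c"
proof -
  have "m * c + r < Suc m * c" using assms(2) by simp
  also have "\<dots> \<le> n * c" using assms(1) by (intro mult_le_mono1) simp
  finally show ?thesis .
qed

lemma qform_scale: "qform n (\<lambda>i j. a * A i j) x = a * qform n A x"
  unfolding qform_def by (simp add: sum_distrib_left algebra_simps)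

lemma qform_uminus: "qform n (\<lambda>i j. - A i j) x = - qform n A x"
  using qform_scale[of n "-1" A x] by simp

lemma qform_nonneg:
  assumes "pos_def n A"
  shows "qform n A x \<ge> 0"
proof (cases "\<exists>i<n. x i \<noteq> 0")
  case True
  then show ?thesis using assms unfolding pos_def_def by force
next
  case False
  then show ?thesis unfolding qform_def by simp
qed

lemma qform_blk2:
  "qform (n1 + n2) (blk2 n1 Q R) (vcat n1 x y) = qform n1 Q x + qform n2 R y"
  unfolding qform_def by (simp add: sum_lessThan_add sum.distrib blk2_def vcat_def)

lemma qform_blkdiag:
  "qform (n * c) (blkdiag c n T) (stack c w) = (\<Sum>m<n. qform c T (w m))"
proof -
  have entry: "stack c w (m * c + r) * blkdiag c n T (m * c + r) (m' * c + s) * stack c w (m' * c + s)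
      = (if m' = m then w m r * T r s * w m s else 0)"
    if "m < n" "m' < n" "r < c" "s < c" for m m' r s
  proof -
    have "m * c + r < n * c" "m' * c + s < n * c"
      using that by (simp_all add: mult_add_less_mult)
    then show ?thesis using that by (auto simp: stack_def blkdiag_def)
  qed
  have row: "(\<Sum>m'<n. \<Sum>s<c. stack c w (m * c + r) * blkdiag c n T (m * c + r) (m' * c + s)
        * stack c w (m' * c + s)) = (\<Sum>s<c. w m r * T r s * w m s)"
    if "m < n" "r < c" for m r
  proof -
    have "(\<Sum>m'<n. \<Sum>s<c. stack c w (m * c + r) * blkdiag c n T (m * c + r) (m' * c + s)
        * stack c w (m' * c + s)) = (\<Sum>m'<n. if m' = m then \<Sum>s<c. w m r * T r s * w m s else 0)"
      using that by (intro sum.cong refl) (simp add: entry)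
    also have "\<dots> = (\<Sum>s<c. w m r * T r s * w m s)"
      using that(1) by simp
    finally show ?thesis .
  qed
  show ?thesis
    unfolding qform_def sum_lessThan_mult by (simp add: row)
qed

lemma sum_qform_deviations_from_mean:
  fixes l :: nat and d :: "nat \<Rightarrow> nat \<Rightarrow> real"
  defines "m \<equiv> \<lambda>r. 1 / real l * (\<Sum>j<l. d j r)"
  shows "(\<Sum>j<l. qform n A (\<lambda>r. d j r - m r)) = (\<Sum>j<l. qform n A (d j)) - real l * qform n A m"
proof -
  have sum_eq: "(\<Sum>j<l. d j r) = real l * m r" for r
    unfolding m_def by (cases "l = 0") simp_all
  have entry: "(\<Sum>j<l. (d j r - m r) * A r s * (d j s - m s))
      = (\<Sum>j<l. d j r * A r s * d j s) - real l * (m r * A r s * m s)" for r s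
  proof -
    have "(\<Sum>j<l. (d j r - m r) * A r s * (d j s - m s))
        = (\<Sum>j<l. d j r * A r s * d j s) - (\<Sum>j<l. d j r) * A r s * m s
          - m r * A r s * (\<Sum>j<l. d j s) + real l * (m r * A r s * m s)"
      by (simp add: algebra_simps sum.distrib sum_subtractf sum_distrib_left sum_distrib_right)
    then show ?thesis by (simp add: sum_eq algebra_simps)
  qed
  have "(\<Sum>j<l. qform n A (\<lambda>r. d j r - m r))
      = (\<Sum>r<n. \<Sum>s<n. \<Sum>j<l. (d j r - m r) * A r s * (d j s - m s))"
    unfolding qform_def by (subst sum.swap) (simp add: sum.swap[of _ "{..<l}"])
  also have "\<dots> = (\<Sum>r<n. \<Sum>s<n. (\<Sum>j<l. d j r * A r s * d j s) - real l * (m r * A r s * m s))"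
    by (simp add: entry)
  also have "\<dots> = (\<Sum>j<l. qform n A (d j)) - real l * qform n A m"
    unfolding qform_def by (simp add: sum_subtractf sum_distrib_left sum.swap[of _ "{..<l}"])
  finally show ?thesis .
qed

lemma qform_mean_le:
  assumes "pos_def n A"
  shows "real l * qform n A (\<lambda>r. 1 / real l * (\<Sum>j<l. d j r)) \<le> (\<Sum>j<l. qform n A (d j))"
proof -
  have "0 \<le> (\<Sum>j<l. qform n A (\<lambda>r. d j r - 1 / real l * (\<Sum>j<l. d j r)))"
    by (intro sum_nonneg qform_nonneg[OF assms])
  then show ?thesis
    using sum_qform_deviations_from_mean[where n = n and A = A and l = l and d = d] by linarith
qed

lemma avgpool_qform_le:
  assumes "pos_def n A"
  shows "real l * qform n A (avgpool l w k) \<le> (\<Sum>j<l. qform n A (w (l * k + j)))"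
  using qform_mean_le[OF assms, of l "\<lambda>j. w (l * k + j)"] by (simp add: avgpool_def[abs_def])

lemma avgpool_diff:
  "(\<lambda>r. avgpool l v k r - avgpool l w k r) = avgpool l (\<lambda>m r. v m r - w m r) k"
  by (simp add: fun_eq_iff avgpool_def sum_subtractf right_diff_distrib)

lemma stack_diff: "(\<lambda>i. stack c v i - stack c w i) = stack c (\<lambda>m r. v m r - w m r)"
  by (simp add: fun_eq_iff stack_def)

theorem lemma8:
  fixes c l N :: nat and T :: "nat \<Rightarrow> nat \<Rightarrow> real"
    and wa wb :: "nat \<Rightarrow> nat \<Rightarrow> real"
  assumes "c > 0" and "l > 0" and "N > 0"
    and "pos_def c T"
  shows "(\<forall>k<N.
            - qform c T (\<lambda>r. avgpool l wa k r - avgpool l wb k r)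
            + (1 / sqrt (real l))\<^sup>2 *
                (\<Sum>j<l. qform c T (\<lambda>r. wa (l * k + j) r - wb (l * k + j) r)) \<ge> 0)
       \<and> qform (N * c + l * N * c)
           (blk2 (N * c) (\<lambda>i j. - blkdiag c N T i j)
                         (\<lambda>i j. (1 / sqrt (real l))\<^sup>2 * blkdiag c (l * N) T i j))
           (vcat (N * c)
              (\<lambda>i. stack c (avgpool l wa) i - stack c (avgpool l wb) i)
              (\<lambda>i. stack c wa i - stack c wb i)) \<ge> 0"
proof -
  let ?d = "\<lambda>m r. wa m r - wb m r"
  let ?gap = "\<lambda>k. - qform c T (avgpool l ?d k) + 1 / real l * (\<Sum>j<l. qform c T (?d (l * k + j)))"
  have mu_sq: "(1 / sqrt (real l))\<^sup>2 = 1 / real l"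
    using assms(2) by (simp add: power_divide)
  have gap_nonneg: "?gap k \<ge> 0" for k
    using avgpool_qform_le[OF assms(4), of l ?d k] assms(2) by (simp add: field_simps)
  have regroup: "(\<Sum>m<l * N. qform c T (?d m)) = (\<Sum>k<N. \<Sum>j<l. qform c T (?d (l * k + j)))"
    using sum_lessThan_mult[of "\<lambda>m. qform c T (?d m)" N l] by (simp add: mult.commute)
  have "qform (N * c + l * N * c)
           (blk2 (N * c) (\<lambda>i j. - blkdiag c N T i j) (\<lambda>i j. 1 / real l * blkdiag c (l * N) T i j))
           (vcat (N * c) (stack c (avgpool l ?d)) (stack c ?d))
      = (\<Sum>k<N. ?gap k)"
    by (simp only: qform_blk2 qform_uminus qform_scale qform_blkdiag regroup
        sum.distrib sum_negf sum_distrib_left)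
  with gap_nonneg show ?thesis
    unfolding avgpool_diff stack_diff mu_sq by (simp add: sum_nonneg)
qed

end
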